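(* Let $\mathbf{M}\in\mathcal{M}_T(n)$ with $\mathbf{M}\neq 0$. Set $\sigma=\|\mathbf{M}\hat{\mathbf{1}}\|_2$ and $\hat{\mathbf{u}}=\mathbf{M}\hat{\mathbf{1}}/\|\mathbf{M}\hat{\mathbf{1}}\|_2$. Then $\hat{\mathbf{u}}$ and $\hat{\mathbf{1}}$ are orthonormal and $\mathbf{M}=\sigma\,(\hat{\mathbf{u}},-\hat{\mathbf{1}})(\hat{\mathbf{1}},\hat{\mathbf{u}})^\top$, which is a singular value decomposition of $\mathbf{M}$ with both nonzero singular values equal to $\sigma$.
   Context: $\hat{\mathbf{1}}=(1,\dots,1)^\top/\sqrt{n}\in\mathbb{R}^n$; $(\mathbf{a},\mathbf{b})$ denotes the $n\times 2$ matrix with columns $\mathbf{a},\mathbf{b}$. A TDOA matrix is an $n\times n$ real matrix whose $(i,j)$ entry is $\tau_i-\tau_j$ for some $(\tau_1,\dots,\tau_n)\in\mathbb{R}^n$; $\mathcal{M}_T(n)$ is the set of all $n\times n$ TDOA matrices. *)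

theory Defs
  imports "HOL-Analysis.Analysis"
begin

definition onehat :: "real ^ 'n" where
  "onehat = (\<chi> i. 1 / sqrt (real CARD('n)))"

definition TDOA_matrices :: "(real ^ 'n ^ 'n) set" where
  "TDOA_matrices = {M. \<exists>\<tau> :: real ^ 'n. \<forall>i j. M $ i $ j = \<tau> $ i - \<tau> $ j}"

definition cols2 :: "real ^ 'n \<Rightarrow> real ^ 'n \<Rightarrow> real ^ 2 ^ 'n" where
  "cols2 a b = (\<chi> i. \<chi> k. if k = 1 then a $ i else b $ i)"

end

theory Submission
  imports Defs
begin

text \<open>
  Writing \<open>h\<close> for the normalised all-ones vector, a TDOA matrix is
  \<open>\<tau> 1\<^sup>T - 1 \<tau>\<^sup>T = a h\<^sup>T - h a\<^sup>T\<close> with \<open>a = \<surd>n \<tau>\<close>.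
  For any matrix of this skew form with \<open>h\<close> a unit vector, \<open>v = M h = a - (a \<bullet> h) h\<close>
  is orthogonal to \<open>h\<close>, and the \<open>h h\<^sup>T\<close> terms cancel in \<open>v h\<^sup>T - h v\<^sup>T\<close>, so
  \<open>M = v h\<^sup>T - h v\<^sup>T = \<sigma> (u h\<^sup>T - h u\<^sup>T)\<close>; this is the claimed factorisation,
  and the two factors have orthonormal columns.
\<close>

lemma norm_onehat: "norm (onehat :: real ^ 'n) = 1"
  by (simp add: norm_eq_sqrt_inner inner_vec_def onehat_def)

lemma TDOA_matrix_skew_form:
  assumes "M \<in> TDOA_matrices"
  obtains a :: "real ^ 'n" where "\<And>i j. M $ i $ j = a $ i * onehat $ j - onehat $ i * a $ j"
proof -
  obtain \<tau> :: "real ^ 'n" where \<tau>: "\<And>i j. M $ i $ j = \<tau> $ i - \<tau> $ j"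
    using assms unfolding TDOA_matrices_def by blast
  show thesis
    by (rule that[of "sqrt (CARD('n)) *\<^sub>R \<tau>"]) (simp add: \<tau> onehat_def)
qed

lemma skew_outer_mult_vec:
  fixes M :: "real ^ 'n ^ 'n"
  assumes "\<And>i j. M $ i $ j = a $ i * h $ j - h $ i * a $ j"
  shows "M *v h = (h \<bullet> h) *\<^sub>R a - (a \<bullet> h) *\<^sub>R h"
  by (simp add: vec_eq_iff matrix_vector_mult_def assms inner_vec_def algebra_simps
      sum_subtractf sum_distrib_left)

lemma skew_outer_image_of_unit:
  fixes M :: "real ^ 'n ^ 'n"
  assumes "norm h = 1" and M: "\<And>i j. M $ i $ j = a $ i * h $ j - h $ i * a $ j"
  shows "(M *v h) \<bullet> h = 0"
    and "M $ i $ j = (M *v h) $ i * h $ j - h $ i * (M *v h) $ j"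
proof -
  have hh: "h \<bullet> h = 1"
    using assms(1) by (simp add: norm_eq_sqrt_inner)
  have v: "M *v h = a - (a \<bullet> h) *\<^sub>R h"
    using skew_outer_mult_vec[OF M] hh by simp
  show "(M *v h) \<bullet> h = 0"
    by (simp add: v inner_diff_left hh)
  show "M $ i $ j = (M *v h) $ i * h $ j - h $ i * (M *v h) $ j"
    by (simp add: v M algebra_simps)
qed

lemma cols2_mult_transpose_cols2:
  "(cols2 a b ** transpose (cols2 c d)) $ i $ j = a $ i * c $ j + b $ i * d $ j"
  by (simp add: matrix_matrix_mult_def transpose_def cols2_def sum_2)

lemma transpose_cols2_mult_cols2_orthonormal:
  fixes a b :: "real ^ 'n"
  assumes "norm a = 1" and "norm b = 1" and "a \<bullet> b = 0"
  shows "transpose (cols2 a b) ** cols2 a b = mat 1"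
proof -
  have "a \<bullet> a = 1" "b \<bullet> b = 1" "b \<bullet> a = 0"
    using assms by (simp_all add: norm_eq_sqrt_inner inner_commute)
  then show ?thesis
    using assms(3)
    by (simp add: vec_eq_iff forall_2 matrix_matrix_mult_def transpose_def cols2_def mat_def
        inner_vec_def)
qed

theorem lemma1:
  fixes M :: "real ^ 'n ^ 'n"
  assumes "M \<in> TDOA_matrices" and "M \<noteq> 0"
  defines "\<sigma> \<equiv> norm (M *v onehat)"
      and "u \<equiv> (1 / norm (M *v onehat)) *\<^sub>R (M *v onehat)"
  shows "norm u = 1 \<and> norm (onehat :: real ^ 'n) = 1 \<and> u \<bullet> onehat = 0
    \<and> M = \<sigma> *\<^sub>R (cols2 u (- onehat) ** transpose (cols2 onehat u))
    \<and> \<sigma> > 0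
    \<and> transpose (cols2 u (- onehat)) ** cols2 u (- onehat) = mat 1
    \<and> transpose (cols2 onehat u) ** cols2 onehat u = mat 1"
proof -
  define v where "v = M *v onehat"
  obtain a where "\<And>i j. M $ i $ j = a $ i * onehat $ j - onehat $ i * a $ j"
    using TDOA_matrix_skew_form[OF assms(1)] by blast
  note skew = skew_outer_image_of_unit[OF norm_onehat this, folded v_def]
  have "v \<noteq> 0"
  proof
    assume "v = 0"
    then have "M = 0"
      using skew(2) by (simp add: vec_eq_iff)
    with assms(2) show False ..
  qed
  then have \<sigma>: "\<sigma> > 0" and v: "v = \<sigma> *\<^sub>R u"
    by (simp_all add: \<sigma>_def u_def v_def)
  have u: "norm u = 1" "u \<bullet> onehat = 0"
    using \<sigma> skew(1) by (simp_all add: \<sigma>_def u_def v_def)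
  have "M = \<sigma> *\<^sub>R (cols2 u (- onehat) ** transpose (cols2 onehat u))"
    by (simp add: vec_eq_iff cols2_mult_transpose_cols2 skew(2) v algebra_simps)
  moreover have "transpose (cols2 u (- onehat)) ** cols2 u (- onehat) = mat 1"
    using u by (intro transpose_cols2_mult_cols2_orthonormal) (simp_all add: norm_onehat)
  moreover have "transpose (cols2 onehat u) ** cols2 onehat u = mat 1"
    using u by (intro transpose_cols2_mult_cols2_orthonormal) (simp_all add: norm_onehat inner_commute)
  ultimately show ?thesis
    using \<sigma> u norm_onehat by blast
qed

end
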